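(* Let $E$ be a real or complex JB$^*$-triple and let $M$ be an $M$-ideal of $E$. Then $\delta(a,b)(M)\subseteq M$ for all $a,b\in E$, where $\delta(a,b)=L(a,b)-L(b,a)$. In particular, if $M$ is an $M$-summand of a real JBW$^*$-triple $W$, then $\delta(a,b)(M)\subseteq M$ for all $a,b\in W$.
   Context: A real JB$^*$-triple is a norm-closed real subspace of a complex JB$^*$-triple closed under the triple product; a real JBW$^*$-triple is one that is a dual Banach space. $L(a,b)$ denotes the operator $x\mapsto\{a,b,x\}$. A projection $Q$ on a Banach space $X$ is an $L$-projection if $\|x\|=\|Qx\|+\|x-Qx\|$ for all $x$; a closed subspace $M$ of $V$ is an $M$-ideal if $M^{\circ}=\{\varphi\in V^*:\varphi|_M\equiv0\}$ is the image of an $L$-projection on $V^*$. A projection $P$ on $V$ is an $M$-projection if $\|x\|=\max\{\|Px\|,\|x-Px\|\}$ for all $x$; its image is an $M$-summand. *)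

theory Defs
  imports "HOL-Analysis.Analysis"
begin

text \<open>Multiplication by i is the real-linear map J; complex scalar multiplication is
  (a + i b) x = a x + b J x.\<close>

definition cscale :: "('a::real_normed_vector \<Rightarrow> 'a) \<Rightarrow> complex \<Rightarrow> 'a \<Rightarrow> 'a" where
  "cscale J c x = Re c *\<^sub>R x + Im c *\<^sub>R J x"

definition complex_structure :: "('a::real_normed_vector \<Rightarrow> 'a) \<Rightarrow> bool" where
  "complex_structure J \<longleftrightarrow> linear J \<and> (\<forall>x. J (J x) = - x) \<and>
     (\<forall>c x. norm (cscale J c x) = cmod c * norm x)"

primrec op_pow :: "('a::real_normed_vector \<Rightarrow>\<^sub>L 'a) \<Rightarrow> nat \<Rightarrow> ('a \<Rightarrow>\<^sub>L 'a)" where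
  "op_pow S 0 = id_blinfun"
| "op_pow S (Suc n) = S o\<^sub>L op_pow S n"

definition op_exp :: "('a::real_normed_vector \<Rightarrow>\<^sub>L 'a) \<Rightarrow> ('a \<Rightarrow>\<^sub>L 'a)" where
  "op_exp S = (\<Sum>n. (1 / fact n) *\<^sub>R op_pow S n)"

definition op_invertible :: "('a::real_normed_vector \<Rightarrow>\<^sub>L 'a) \<Rightarrow> bool" where
  "op_invertible S \<longleftrightarrow> (\<exists>R. S o\<^sub>L R = id_blinfun \<and> R o\<^sub>L S = id_blinfun)"

definition cspectrum :: "('a::real_normed_vector \<Rightarrow> 'a) \<Rightarrow> ('a \<Rightarrow>\<^sub>L 'a) \<Rightarrow> complex set" where
  "cspectrum J S = {c. \<not> op_invertible (S - Blinfun (cscale J c))}"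

definition hermitian :: "('a::real_normed_vector \<Rightarrow> 'a) \<Rightarrow> ('a \<Rightarrow>\<^sub>L 'a) \<Rightarrow> bool" where
  "hermitian J S \<longleftrightarrow>
     (\<forall>t::real. \<forall>x. norm (blinfun_apply (op_exp (t *\<^sub>R (Blinfun J o\<^sub>L S))) x) = norm x)"

definition complex_JB_triple ::
    "('a::banach \<Rightarrow> 'a) \<Rightarrow> ('a \<Rightarrow> 'a \<Rightarrow> 'a \<Rightarrow> 'a) \<Rightarrow> bool" where
  "complex_JB_triple J T \<longleftrightarrow>
     complex_structure J \<and>
     (\<forall>y z. linear (\<lambda>x. T x y z)) \<and> (\<forall>x z. linear (\<lambda>y. T x y z)) \<and>
     (\<forall>x y. linear (\<lambda>z. T x y z)) \<and>
     (\<forall>x y z. T (J x) y z = J (T x y z)) \<and>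
     (\<forall>x y z. T x (J y) z = - J (T x y z)) \<and>
     (\<forall>x y z. T x y z = T z y x) \<and>
     (\<exists>K. \<forall>x y z. norm (T x y z) \<le> K * norm x * norm y * norm z) \<and>
     (\<forall>a b x y z. T a b (T x y z) =
         T (T a b x) y z - T x (T b a y) z + T x y (T a b z)) \<and>
     (\<forall>a. hermitian J (Blinfun (T a a)) \<and>
          cspectrum J (Blinfun (T a a)) \<subseteq> complex_of_real ` {0..}) \<and>
     (\<forall>a. norm (T a a a) = norm a ^ 3)"

definition real_JB_triple ::
    "('a::banach \<Rightarrow> 'a) \<Rightarrow> ('a \<Rightarrow> 'a \<Rightarrow> 'a \<Rightarrow> 'a) \<Rightarrow> 'a set \<Rightarrow> bool" where
  "real_JB_triple J T E \<longleftrightarrow> complex_JB_triple J T \<and> closed E \<and> subspace E \<and>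
     (\<forall>x\<in>E. \<forall>y\<in>E. \<forall>z\<in>E. T x y z \<in> E)"

text \<open>Real JBW*-triple: real JB*-triple which is (isometrically isomorphic to) the dual
  of a Banach space X (type 'p).\<close>
definition real_JBW_triple ::
    "('a::banach \<Rightarrow> 'a) \<Rightarrow> ('a \<Rightarrow> 'a \<Rightarrow> 'a \<Rightarrow> 'a) \<Rightarrow> 'a set
      \<Rightarrow> (('p::banach \<Rightarrow>\<^sub>L real) \<Rightarrow> 'a) \<Rightarrow> bool" where
  "real_JBW_triple J T W \<Phi> \<longleftrightarrow> real_JB_triple J T W \<and>
     linear \<Phi> \<and> range \<Phi> = W \<and> (\<forall>f. norm (\<Phi> f) = norm f)"

text \<open>Dual of the normed space E (a subset of 'a, with the restricted norm) over the
  scalar field 'k acting on E by smul.  Functionals are normalised to vanish off E.\<close>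
definition dual_sp :: "('k::real_normed_field \<Rightarrow> 'a::real_normed_vector \<Rightarrow> 'a) \<Rightarrow> 'a set
     \<Rightarrow> ('a \<Rightarrow> 'k) set" where
  "dual_sp smul E = {\<phi>. (\<forall>x\<in>E. \<forall>y\<in>E. \<phi> (x + y) = \<phi> x + \<phi> y) \<and>
      (\<forall>c. \<forall>x\<in>E. \<phi> (smul c x) = c * \<phi> x) \<and>
      (\<exists>K. \<forall>x\<in>E. norm (\<phi> x) \<le> K * norm x) \<and> (\<forall>x. x \<notin> E \<longrightarrow> \<phi> x = 0)}"

definition dual_norm :: "'a::real_normed_vector set \<Rightarrow> ('a \<Rightarrow> 'k::real_normed_field) \<Rightarrow> real" where
  "dual_norm E \<phi> = Sup ((\<lambda>x. norm (\<phi> x)) ` {x\<in>E. norm x \<le> 1})"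

definition annihilator :: "('k::real_normed_field \<Rightarrow> 'a::real_normed_vector \<Rightarrow> 'a) \<Rightarrow> 'a set
     \<Rightarrow> 'a set \<Rightarrow> ('a \<Rightarrow> 'k) set" where
  "annihilator smul E M = {\<phi> \<in> dual_sp smul E. \<forall>x\<in>M. \<phi> x = 0}"

definition L_projection :: "('k::real_normed_field \<Rightarrow> 'a::real_normed_vector \<Rightarrow> 'a) \<Rightarrow> 'a set
     \<Rightarrow> (('a \<Rightarrow> 'k) \<Rightarrow> ('a \<Rightarrow> 'k)) \<Rightarrow> bool" where
  "L_projection smul E Q \<longleftrightarrow>
     (\<forall>\<phi>\<in>dual_sp smul E. Q \<phi> \<in> dual_sp smul E \<and> Q (Q \<phi>) = Q \<phi> \<and>
        dual_norm E \<phi> = dual_norm E (Q \<phi>) + dual_norm E (\<lambda>x. \<phi> x - Q \<phi> x)) \<and>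
     (\<forall>\<phi>\<in>dual_sp smul E. \<forall>\<psi>\<in>dual_sp smul E. Q (\<lambda>x. \<phi> x + \<psi> x) = (\<lambda>x. Q \<phi> x + Q \<psi> x)) \<and>
     (\<forall>c. \<forall>\<phi>\<in>dual_sp smul E. Q (\<lambda>x. c * \<phi> x) = (\<lambda>x. c * Q \<phi> x))"

definition M_ideal :: "('k::real_normed_field \<Rightarrow> 'a::real_normed_vector \<Rightarrow> 'a) \<Rightarrow> 'a set
     \<Rightarrow> 'a set \<Rightarrow> bool" where
  "M_ideal smul E M \<longleftrightarrow> M \<subseteq> E \<and> closed M \<and> 0 \<in> M \<and>
     (\<forall>x\<in>M. \<forall>y\<in>M. x + y \<in> M) \<and> (\<forall>c. \<forall>x\<in>M. smul c x \<in> M) \<and>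
     (\<exists>Q. L_projection smul E Q \<and> Q ` dual_sp smul E = annihilator smul E M)"

definition M_projection :: "'a::real_normed_vector set \<Rightarrow> ('a \<Rightarrow> 'a) \<Rightarrow> bool" where
  "M_projection W P \<longleftrightarrow>
     (\<forall>x\<in>W. P x \<in> W \<and> P (P x) = P x \<and> norm x = max (norm (P x)) (norm (x - P x))) \<and>
     (\<forall>x\<in>W. \<forall>y\<in>W. P (x + y) = P x + P y) \<and> (\<forall>c. \<forall>x\<in>W. P (c *\<^sub>R x) = c *\<^sub>R P x)"

definition M_summand :: "'a::real_normed_vector set \<Rightarrow> 'a set \<Rightarrow> bool" where
  "M_summand W M \<longleftrightarrow> (\<exists>P. M_projection W P \<and> M = P ` W)"

definition delta :: "('a \<Rightarrow> 'a \<Rightarrow> 'a \<Rightarrow> 'a::ab_group_add) \<Rightarrow> 'a \<Rightarrow> 'a \<Rightarrow> 'a \<Rightarrow> 'a" where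
  "delta T a b x = T a b x - T b a x"

end

(* The derivation delta(a,b) = L(a,b) - L(b,a) of a complex JB*-triple equals
   J L(a + J b, a + J b) - J L(a,a) - J L(b,b), a sum of generators of isometry groups, since
   each L(x,x) is hermitian.  Hence ||x + t delta(a,b) x|| <= (1 + C t^2) ||x|| for small |t|.
   Let M be an M-ideal, Q the L-projection onto its annihilator, phi in the annihilator and
   theta = phi o delta(a,b).  Splitting ||phi +- t theta|| along Q gives
   ||phi|| + t ||theta - Q theta|| <= (1 + C t^2) ||phi||, so theta = Q theta is again in the
   annihilator, and by Hahn-Banach delta(a,b) maps M into M.  The real case is the same
   argument carried out inside the complex triple.  An M-summand P(W) is an M-ideal, the
   L-projection being phi |-> phi o (I - P). *)

theory Submission
  imports Defs
begin

section \<open>The Hahn-Banach theorem\<close>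

text \<open>Norm-dominated linear functionals on subspaces, represented by their graphs;
  single-valuedness follows from domination.\<close>
definition norm_dominated_graph :: "('a::real_normed_vector \<times> real) set \<Rightarrow> bool" where
  "norm_dominated_graph G \<longleftrightarrow> subspace G \<and> (\<forall>p\<in>G. snd p \<le> norm (fst p))"

lemma norm_dominated_graph_single_valued:
  assumes G: "norm_dominated_graph G" and "p \<in> G" "q \<in> G" "fst p = fst q"
  shows "snd p = snd q"
proof -
  have "p - q \<in> G" "q - p \<in> G"
    using G assms(2,3) unfolding norm_dominated_graph_def by (auto intro: subspace_diff)
  then have "snd p - snd q \<le> 0" "snd q - snd p \<le> 0"
    using G assms(4) unfolding norm_dominated_graph_def by force+
  then show ?thesis by simp
qed

lemma norm_dominated_graph_extension_value:
  assumes G: "norm_dominated_graph G"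
  obtains c where "\<And>q. q \<in> G \<Longrightarrow> snd q - norm (fst q - z) \<le> c"
    "\<And>q. q \<in> G \<Longrightarrow> c \<le> norm (fst q + z) - snd q"
proof -
  have sG: "subspace G" and dom: "\<And>p. p \<in> G \<Longrightarrow> snd p \<le> norm (fst p)"
    using G unfolding norm_dominated_graph_def by blast+
  have gap: "snd p - norm (fst p - z) \<le> norm (fst q + z) - snd q" if "p \<in> G" "q \<in> G" for p q
  proof -
    have "snd p + snd q \<le> norm (fst p + fst q)"
      using dom[OF subspace_add[OF sG that]] by simp
    also have "\<dots> \<le> norm (fst p - z) + norm (fst q + z)"
      using norm_triangle_ineq[of "fst p - z" "fst q + z"] by simp
    finally show ?thesis by simp
  qed
  define c where "c = (SUP p\<in>G. snd p - norm (fst p - z))"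
  have G0: "0 \<in> G" using sG by (rule subspace_0)
  show ?thesis
  proof (rule that)
    show "snd q - norm (fst q - z) \<le> c" if "q \<in> G" for q
      unfolding c_def using gap[OF _ G0] that by (intro cSUP_upper bdd_aboveI2) auto
    show "c \<le> norm (fst q + z) - snd q" if "q \<in> G" for q
      unfolding c_def using gap[OF _ that] G0 by (intro cSUP_least) auto
  qed
qed

lemma norm_dominated_graph_extend:
  assumes G: "norm_dominated_graph G"
  obtains c where "norm_dominated_graph (span (insert (z, c) G))"
proof -
  have sG: "subspace G" and dom: "\<And>p. p \<in> G \<Longrightarrow> snd p \<le> norm (fst p)"
    using G unfolding norm_dominated_graph_def by blast+
  obtain c where c_lower: "\<And>q. q \<in> G \<Longrightarrow> snd q - norm (fst q - z) \<le> c"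
    and c_upper: "\<And>q. q \<in> G \<Longrightarrow> c \<le> norm (fst q + z) - snd q"
    using norm_dominated_graph_extension_value[OF G] by metis
  have "snd x \<le> norm (fst x)" if "x \<in> span (insert (z, c) G)" for x
  proof -
    have "\<exists>r. x - r *\<^sub>R (z, c) \<in> span G"
      using that unfolding span_insert by blast
    then obtain r where "x - r *\<^sub>R (z, c) \<in> G"
      using sG span_eq_iff[of G] by metis
    define p where "p = x - r *\<^sub>R (z, c)"
    have pG: "p \<in> G" and x: "x = p + r *\<^sub>R (z, c)"
      using \<open>x - r *\<^sub>R (z, c) \<in> G\<close> by (simp_all add: p_def)
    consider "r = 0" | "r > 0" | "r < 0" by linarith
    then show ?thesis
    proof cases
      case 1 then show ?thesis using dom[OF pG] x by simp
    next
      case 2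
      define q where "q = (1 / r) *\<^sub>R p"
      have "q \<in> G" using pG sG by (simp add: q_def subspace_scale)
      then have "snd q + c \<le> norm (fst q + z)" using c_upper by fastforce
      then have "r * (snd q + c) \<le> r * norm (fst q + z)" using 2 by simp
      moreover have "x = r *\<^sub>R (q + (z, c))" using 2 by (simp add: x q_def algebra_simps)
      ultimately show ?thesis using 2 by simp
    next
      case 3
      define q where "q = (1 / r) *\<^sub>R p"
      have "- q \<in> G" using pG sG by (simp add: q_def subspace_scale subspace_neg)
      then have "- snd q - c \<le> norm (fst q + z)"
        using c_lower[of "- q"] by (simp add: norm_minus_commute add.commute)
      then have "- r * (- snd q - c) \<le> - r * norm (fst q + z)" using 3 by simp
      moreover have "x = r *\<^sub>R (q + (z, c))" using 3 by (simp add: x q_def algebra_simps)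
      then have "snd x = r * (snd q + c)" "norm (fst x) = - r * norm (fst q + z)"
        using 3 by simp_all
      ultimately show ?thesis by (simp add: algebra_simps)
    qed
  qed
  then show ?thesis by (intro that[of c]) (simp add: norm_dominated_graph_def)
qed

lemma norm_dominated_graph_Union_chain:
  assumes "C \<noteq> {}" and dom: "\<And>G. G \<in> C \<Longrightarrow> norm_dominated_graph G"
    and chain: "\<And>G H. G \<in> C \<Longrightarrow> H \<in> C \<Longrightarrow> G \<subseteq> H \<or> H \<subseteq> G"
  shows "norm_dominated_graph (\<Union>C)"
proof -
  have sub: "subspace G" if "G \<in> C" for G using dom[OF that] by (simp add: norm_dominated_graph_def)
  have "subspace (\<Union>C)"
    unfolding subspace_def
  proof (intro conjI ballI allI)
    show "0 \<in> \<Union>C" using \<open>C \<noteq> {}\<close> sub subspace_0 by blast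
  next
    fix x y assume "x \<in> \<Union>C" "y \<in> \<Union>C"
    then obtain G H where "G \<in> C" "H \<in> C" "x \<in> G" "y \<in> H" by blast
    then show "x + y \<in> \<Union>C" using chain[of G H] sub subspace_add by blast
  next
    fix c :: real and x assume "x \<in> \<Union>C"
    then show "c *\<^sub>R x \<in> \<Union>C" using sub subspace_scale by blast
  qed
  then show ?thesis using dom unfolding norm_dominated_graph_def by blast
qed

lemma norm_dominated_graph_total_extension:
  assumes "norm_dominated_graph G0"
  obtains G where "norm_dominated_graph G" "G0 \<subseteq> G" "\<And>x. \<exists>v. (x, v) \<in> G"
proof -
  let ?A = "{G. norm_dominated_graph G \<and> G0 \<subseteq> G}"
  have "\<exists>G\<in>?A. \<forall>H\<in>?A. G \<subseteq> H \<longrightarrow> H = G"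
  proof (rule subset_Zorn_nonempty)
    show "?A \<noteq> {}" using assms by blast
    fix C assume C: "C \<noteq> {}" "subset.chain ?A C"
    have "C \<subseteq> ?A" using C(2) by (simp add: subset.chain_def)
    have "norm_dominated_graph (\<Union>C)"
      by (rule norm_dominated_graph_Union_chain[OF C(1)])
        (use \<open>C \<subseteq> ?A\<close> subset.chain_total[OF C(2)] in blast)+
    moreover have "G0 \<subseteq> \<Union>C" using \<open>C \<subseteq> ?A\<close> C(1) by blast
    ultimately show "\<Union>C \<in> ?A" by blast
  qed
  then obtain G where "G \<in> ?A" and max: "\<And>H. H \<in> ?A \<Longrightarrow> G \<subseteq> H \<Longrightarrow> H = G"
    by auto
  then have dom: "norm_dominated_graph G" and G0: "G0 \<subseteq> G" by auto
  have "\<exists>v. (x, v) \<in> G" for x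
  proof -
    obtain c where c: "norm_dominated_graph (span (insert (x, c) G))"
      using norm_dominated_graph_extend[OF dom] .
    have ext: "insert (x, c) G \<subseteq> span (insert (x, c) G)" by (rule span_superset)
    then have "span (insert (x, c) G) = G"
      using c G0 by (intro max) auto
    then show ?thesis using ext by auto
  qed
  then show ?thesis using dom G0 that by blast
qed

theorem Hahn_Banach_norm_dominated:
  fixes G0 :: "('a::real_normed_vector \<times> real) set"
  assumes "norm_dominated_graph G0"
  obtains f where "linear f" "\<And>x. f x \<le> norm x" "\<And>p. p \<in> G0 \<Longrightarrow> f (fst p) = snd p"
proof -
  obtain G where dom: "norm_dominated_graph G" and G0: "G0 \<subseteq> G" and total: "\<And>x. \<exists>v. (x, v) \<in> G"
    using norm_dominated_graph_total_extension[OF assms] by blast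
  define f where "f x = (THE v. (x, v) \<in> G)" for x
  have f_eq: "f x = v" if "(x, v) \<in> G" for x v
    unfolding f_def
  proof (rule the_equality)
    show "w = v" if "(x, w) \<in> G" for w
      using norm_dominated_graph_single_valued[OF dom \<open>(x, w) \<in> G\<close> \<open>(x, v) \<in> G\<close>] by simp
  qed (rule that)
  have fG: "(x, f x) \<in> G" for x using total f_eq by blast
  have sG: "subspace G" using dom by (simp add: norm_dominated_graph_def)
  have "linear f"
  proof
    show "f (x + y) = f x + f y" for x y
      using f_eq subspace_add[OF sG fG[of x] fG[of y]] by simp
    show "f (r *\<^sub>R x) = r *\<^sub>R f x" for r x
      using f_eq subspace_scale[OF sG fG[of x], of r] by simp
  qed
  moreover have "f x \<le> norm x" for x
    using dom fG[of x] by (force simp: norm_dominated_graph_def)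
  moreover have "f (fst p) = snd p" if "p \<in> G0" for p
    using f_eq[of "fst p" "snd p"] that G0 by auto
  ultimately show ?thesis by (rule that)
qed

lemma closed_subspace_separation:
  fixes M :: "'a::real_normed_vector set"
  assumes "closed M" "subspace M" "y \<notin> M"
  obtains f where "linear f" "\<And>x. \<bar>f x\<bar> \<le> norm x" "\<And>x. x \<in> M \<Longrightarrow> f x = 0" "f y \<noteq> 0"
proof -
  define d where "d = infdist y M"
  have d: "0 < d"
    unfolding d_def using assms infdist_pos_not_in_closed subspace_0 by blast
  define G0 where "G0 = span (insert (y, d) (M \<times> {0}))"
  have sM0: "subspace (M \<times> {0 :: real})" using assms(2) by (simp add: subspace_Times)
  have "snd p \<le> norm (fst p)" if "p \<in> G0" for p
  proof -
    have "span (M \<times> {0 :: real}) = M \<times> {0}" using sM0 by simp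
    then have "\<exists>r. p - r *\<^sub>R (y, d) \<in> M \<times> {0}"
      using that unfolding G0_def span_insert by blast
    then obtain r where m: "fst p - r *\<^sub>R y \<in> M" and snd_p: "snd p = r * d"
      by (auto simp: mem_Times_iff)
    show ?thesis
    proof (cases "r \<le> 0")
      case True
      then have "r * d \<le> 0" using d by (simp add: mult_nonpos_nonneg)
      then show ?thesis using snd_p norm_ge_zero[of "fst p"] by linarith
    next
      case False
      have "(- 1 / r) *\<^sub>R (fst p - r *\<^sub>R y) \<in> M" using m assms(2) subspace_scale by blast
      then have "d \<le> dist y ((- 1 / r) *\<^sub>R (fst p - r *\<^sub>R y))"
        unfolding d_def by (rule infdist_le)
      also have "\<dots> = norm (fst p) / r"
        using False by (simp add: dist_norm algebra_simps norm_minus_commute)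
      finally show ?thesis using False snd_p by (simp add: field_simps)
    qed
  qed
  then have "norm_dominated_graph G0"
    by (simp add: norm_dominated_graph_def G0_def)
  then obtain f where f: "linear f" "\<And>x. f x \<le> norm x" "\<And>p. p \<in> G0 \<Longrightarrow> f (fst p) = snd p"
    by (rule Hahn_Banach_norm_dominated) blast
  show ?thesis
  proof (rule that[OF f(1)])
    show "\<bar>f x\<bar> \<le> norm x" for x
      using f(2)[of x] f(2)[of "- x"] linear_neg[OF f(1), of x] by simp
    show "f x = 0" if "x \<in> M" for x
    proof -
      have "(x, 0) \<in> G0" unfolding G0_def using that by (intro span_base) auto
      then show ?thesis using f(3) by fastforce
    qed
    have "(y, d) \<in> G0" unfolding G0_def by (intro span_base) auto
    then show "f y \<noteq> 0" using f(3) d by fastforce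
  qed
qed

section \<open>Operators contractive to second order\<close>

definition second_order_contractive_on :: "'a::real_normed_vector set \<Rightarrow> ('a \<Rightarrow> 'a) \<Rightarrow> bool" where
  "second_order_contractive_on S D \<longleftrightarrow> (\<exists>C t0. 0 \<le> C \<and> 0 < t0 \<and>
     (\<forall>t. \<forall>x\<in>S. \<bar>t\<bar> \<le> t0 \<longrightarrow> norm (x + t *\<^sub>R D x) \<le> (1 + C * t\<^sup>2) * norm x))"

lemma second_order_contractive_on_uminus:
  assumes "second_order_contractive_on S D"
  shows "second_order_contractive_on S (\<lambda>x. - D x)"
proof -
  obtain C t0 where C: "0 \<le> C" "0 < t0"
    and D: "\<And>t x. \<bar>t\<bar> \<le> t0 \<Longrightarrow> x \<in> S \<Longrightarrow> norm (x + t *\<^sub>R D x) \<le> (1 + C * t\<^sup>2) * norm x"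
    using assms unfolding second_order_contractive_on_def by blast
  have "norm (x + t *\<^sub>R - D x) \<le> (1 + C * t\<^sup>2) * norm x" if "\<bar>t\<bar> \<le> t0" "x \<in> S" for t x
    using D[of "- t" x] that by simp
  then show ?thesis using C unfolding second_order_contractive_on_def by blast
qed

lemma second_order_contractive_on_add:
  assumes "second_order_contractive_on S A" "second_order_contractive_on S B"
  shows "second_order_contractive_on S (\<lambda>x. A x + B x)"
proof -
  obtain C1 t1 where C1: "0 \<le> C1" "0 < t1"
    and A: "\<And>t x. \<bar>t\<bar> \<le> t1 \<Longrightarrow> x \<in> S \<Longrightarrow> norm (x + t *\<^sub>R A x) \<le> (1 + C1 * t\<^sup>2) * norm x"
    using assms(1) unfolding second_order_contractive_on_def by blast
  obtain C2 t2 where C2: "0 \<le> C2" "0 < t2"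
    and B: "\<And>t x. \<bar>t\<bar> \<le> t2 \<Longrightarrow> x \<in> S \<Longrightarrow> norm (x + t *\<^sub>R B x) \<le> (1 + C2 * t\<^sup>2) * norm x"
    using assms(2) unfolding second_order_contractive_on_def by blast
  have "norm (x + t *\<^sub>R (A x + B x)) \<le> (1 + 2 * (C1 + C2) * t\<^sup>2) * norm x"
    if t: "\<bar>t\<bar> \<le> min t1 t2 / 2" and x: "x \<in> S" for t x
  proof -
    have "x + t *\<^sub>R (A x + B x) = (1 / 2) *\<^sub>R ((x + (2 * t) *\<^sub>R A x) + (x + (2 * t) *\<^sub>R B x))"
      by (simp add: algebra_simps) (simp flip: scaleR_add_left)
    then have "norm (x + t *\<^sub>R (A x + B x))
        \<le> (norm (x + (2 * t) *\<^sub>R A x) + norm (x + (2 * t) *\<^sub>R B x)) / 2"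
      using norm_triangle_ineq[of "x + (2 * t) *\<^sub>R A x" "x + (2 * t) *\<^sub>R B x"] by simp
    also have "\<dots> \<le> ((1 + C1 * (2 * t)\<^sup>2) * norm x + (1 + C2 * (2 * t)\<^sup>2) * norm x) / 2"
    proof -
      have t12: "\<bar>2 * t\<bar> \<le> t1" "\<bar>2 * t\<bar> \<le> t2" using t by (auto simp: abs_mult)
      show ?thesis
        by (rule divide_right_mono[OF add_mono[OF A[OF t12(1) x] B[OF t12(2) x]]]) simp
    qed
    also have "\<dots> = (1 + 2 * (C1 + C2) * t\<^sup>2) * norm x"
      by (simp add: algebra_simps power2_eq_square)
    finally show ?thesis .
  qed
  then show ?thesis
    unfolding second_order_contractive_on_def using C1 C2
    by (intro exI[of _ "2 * (C1 + C2)"] exI[of _ "min t1 t2 / 2"]) auto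
qed

lemma norm_op_pow_le: "norm (op_pow S n) \<le> norm S ^ n"
proof (induction n)
  case 0
  then show ?case using norm_blinfun_id_le by simp
next
  case (Suc n)
  have "norm (op_pow S (Suc n)) \<le> norm S * norm (op_pow S n)"
    by (simp add: norm_blinfun_compose)
  also have "\<dots> \<le> norm S * norm S ^ n" using Suc by (simp add: mult_left_mono)
  finally show ?case by simp
qed

lemma op_exp_second_order:
  fixes S :: "'a::banach \<Rightarrow>\<^sub>L 'a"
  obtains R where "op_exp S = id_blinfun + S + R" "norm R \<le> norm S ^ 2 * exp (norm S)"
proof -
  define f where "f n = (1 / fact n) *\<^sub>R op_pow S n" for n
  have f_le: "norm (f n) \<le> norm S ^ n / fact n" for n
    using norm_op_pow_le[of S n] by (simp add: f_def divide_right_mono)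
  have exp_sums: "(\<lambda>n. norm S ^ n / fact n) sums exp (norm S)"
    using exp_converges[of "norm S"] by (simp add: divide_inverse mult.commute)
  have "summable f"
    by (rule summable_comparison_test'[OF sums_summable[OF exp_sums] f_le])
  have tail_le: "norm (f (n + 2)) \<le> norm S ^ 2 * (norm S ^ n / fact n)" for n
  proof -
    have "norm (f (n + 2)) \<le> norm S ^ (n + 2) / fact (n + 2)" by (rule f_le)
    also have "\<dots> \<le> norm S ^ (n + 2) / fact n"
      using fact_mono[of n "n + 2", where 'a=real] by (intro divide_left_mono) auto
    also have "\<dots> = norm S ^ 2 * (norm S ^ n / fact n)"
      by (simp add: power_add power2_eq_square field_simps)
    finally show ?thesis .
  qed
  have tail_summable: "summable (\<lambda>n. norm S ^ 2 * (norm S ^ n / fact n))"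
    using sums_summable[OF exp_sums] by (rule summable_mult)
  have "summable (\<lambda>n. norm (f (n + 2)))"
    by (rule summable_comparison_test'[OF tail_summable, of 0])
      (simp only: real_norm_def abs_norm_cancel tail_le)
  define R where "R = (\<Sum>n. f (n + 2))"
  have "op_exp S = R + (\<Sum>i<2. f i)"
    unfolding op_exp_def f_def[symmetric] R_def
    by (rule suminf_split_initial_segment[OF \<open>summable f\<close>])
  also have "(\<Sum>i<2. f i) = id_blinfun + S"
    by (simp add: f_def numeral_2_eq_2 lessThan_Suc blinfun_eqI)
  finally have expansion: "op_exp S = id_blinfun + S + R" by (simp add: algebra_simps)
  have "norm R \<le> (\<Sum>n. norm (f (n + 2)))"
    unfolding R_def by (rule summable_norm) fact
  also have "\<dots> \<le> (\<Sum>n. norm S ^ 2 * (norm S ^ n / fact n))"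
    by (rule suminf_le[OF tail_le]) fact+
  also have "\<dots> = norm S ^ 2 * exp (norm S)"
    using sums_unique[OF sums_mult[OF exp_sums, of "norm S ^ 2"]] by simp
  finally show ?thesis using that expansion by blast
qed

lemma second_order_contractive_if_exp_contractive:
  fixes A :: "'a::banach \<Rightarrow>\<^sub>L 'a"
  assumes contr: "\<And>t x. norm (blinfun_apply (op_exp (t *\<^sub>R A)) x) \<le> norm x"
  shows "second_order_contractive_on S (blinfun_apply A)"
  unfolding second_order_contractive_on_def
proof (intro exI conjI allI ballI impI)
  show "0 \<le> norm A ^ 2 * exp (norm A)" "(0::real) < 1" by simp_all
  fix t :: real and x assume t: "\<bar>t\<bar> \<le> 1"
  obtain R where R: "op_exp (t *\<^sub>R A) = id_blinfun + t *\<^sub>R A + R"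
    and norm_R: "norm R \<le> norm (t *\<^sub>R A) ^ 2 * exp (norm (t *\<^sub>R A))"
    by (rule op_exp_second_order)
  have "x + t *\<^sub>R A x = blinfun_apply (op_exp (t *\<^sub>R A)) x - R x"
    unfolding R by (simp add: blinfun.add_left blinfun.scaleR_left)
  then have "norm (x + t *\<^sub>R A x) \<le> norm (blinfun_apply (op_exp (t *\<^sub>R A)) x) + norm (R x)"
    by (simp add: norm_triangle_ineq4)
  also have "\<dots> \<le> norm x + norm (R x)" using contr[of t x] by simp
  also have "norm (R x) \<le> norm R * norm x" by (rule norm_blinfun)
  also have "norm R \<le> (norm A ^ 2 * exp (norm A)) * t\<^sup>2"
  proof -
    have "exp (norm (t *\<^sub>R A)) \<le> exp (norm A)"
      using t by (simp add: mult_left_le_one_le)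
    then have "norm (t *\<^sub>R A) ^ 2 * exp (norm (t *\<^sub>R A)) \<le> t\<^sup>2 * norm A ^ 2 * exp (norm A)"
      by (simp add: power_mult_distrib mult_left_mono)
    then show ?thesis using norm_R by (simp add: ac_simps)
  qed
  finally show "norm (x + t *\<^sub>R A x) \<le> (1 + norm A ^ 2 * exp (norm A) * t\<^sup>2) * norm x"
    by (simp add: algebra_simps mult_right_mono)
qed


section \<open>Duals of subspaces, L-projections and M-ideals\<close>

lemma nonpos_if_le_mult_near_0:
  fixes a c :: real
  assumes "0 < t0" and le: "\<And>t. 0 < t \<Longrightarrow> t \<le> t0 \<Longrightarrow> a \<le> c * t"
  shows "a \<le> 0"
proof (rule tendsto_lowerbound)
  show "((\<lambda>t. c * t) \<longlongrightarrow> 0) (at_right 0)"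
    by (auto intro!: tendsto_eq_intros)
  show "\<forall>\<^sub>F t in at_right 0. a \<le> c * t"
    using le \<open>0 < t0\<close> by (auto simp: eventually_at_right_field intro!: exI[of _ t0])
qed simp

lemma dual_sp_add:
  assumes "\<phi> \<in> dual_sp smul E" "\<psi> \<in> dual_sp smul E"
  shows "(\<lambda>x. \<phi> x + \<psi> x) \<in> dual_sp smul E"
proof -
  obtain K1 K2 where "\<forall>x\<in>E. norm (\<phi> x) \<le> K1 * norm x" "\<forall>x\<in>E. norm (\<psi> x) \<le> K2 * norm x"
    using assms unfolding dual_sp_def by blast
  then have "\<forall>x\<in>E. norm (\<phi> x + \<psi> x) \<le> (K1 + K2) * norm x"
    by (smt (verit) distrib_right norm_triangle_ineq)
  then have "\<exists>K. \<forall>x\<in>E. norm (\<phi> x + \<psi> x) \<le> K * norm x" by blast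
  then show ?thesis using assms unfolding dual_sp_def by (auto simp: algebra_simps)
qed

lemma dual_sp_scale:
  assumes "\<phi> \<in> dual_sp smul E"
  shows "(\<lambda>x. c * \<phi> x) \<in> dual_sp smul E"
proof -
  obtain K where "\<forall>x\<in>E. norm (\<phi> x) \<le> K * norm x"
    using assms unfolding dual_sp_def by blast
  then have "\<forall>x\<in>E. norm (c * \<phi> x) \<le> (norm c * K) * norm x"
    by (simp add: norm_mult mult.assoc mult_left_mono)
  then have "\<exists>K. \<forall>x\<in>E. norm (c * \<phi> x) \<le> K * norm x" by blast
  then show ?thesis using assms unfolding dual_sp_def by (auto simp: algebra_simps)
qed

lemma dual_sp_diff:
  assumes "\<phi> \<in> dual_sp smul E" "\<psi> \<in> dual_sp smul E"
  shows "(\<lambda>x. \<phi> x - \<psi> x) \<in> dual_sp smul E"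
  using dual_sp_add[OF assms(1) dual_sp_scale[OF assms(2), of "- 1"]] by simp

text \<open>\<open>E\<close> is a subspace over the scalar field \<open>'k\<close>: the complex case is \<open>smul = cscale J\<close>,
  the real case \<open>smul = scaleR\<close>.\<close>
locale scalar_subspace =
  fixes smul :: "'k::real_normed_field \<Rightarrow> 'a::real_normed_vector \<Rightarrow> 'a" and E :: "'a set"
  assumes smul_of_real: "\<And>r x. smul (of_real r) x = r *\<^sub>R x"
    and subspace_E: "subspace E"
    and smul_closed: "\<And>c x. x \<in> E \<Longrightarrow> smul c x \<in> E"
begin

lemma dual_sp_scaleR:
  assumes "\<phi> \<in> dual_sp smul E" "x \<in> E"
  shows "\<phi> (r *\<^sub>R x) = of_real r * \<phi> x"
proof -
  have "\<phi> (smul (of_real r) x) = of_real r * \<phi> x" using assms unfolding dual_sp_def by blast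
  then show ?thesis by (simp add: smul_of_real)
qed

lemma dual_sp_zero: "\<phi> \<in> dual_sp smul E \<Longrightarrow> \<phi> 0 = 0"
  using dual_sp_scaleR[of \<phi> 0 0] subspace_0[OF subspace_E] by simp

lemma bdd_above_dual_norm:
  assumes "\<phi> \<in> dual_sp smul E"
  shows "bdd_above ((\<lambda>x. norm (\<phi> x)) ` {x\<in>E. norm x \<le> 1})"
proof -
  obtain K where K: "\<forall>x\<in>E. norm (\<phi> x) \<le> K * norm x"
    using assms unfolding dual_sp_def by blast
  have "norm (\<phi> x) \<le> \<bar>K\<bar>" if "x \<in> E" "norm x \<le> 1" for x
  proof -
    have "norm (\<phi> x) \<le> \<bar>K\<bar> * norm x"
      using K that(1) by (meson abs_ge_self mult_right_mono norm_ge_zero order_trans)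
    also have "\<dots> \<le> \<bar>K\<bar>" using that(2) by (simp add: mult_left_le)
    finally show ?thesis .
  qed
  then show ?thesis by (intro bdd_aboveI2) auto
qed

lemma dual_norm_bound:
  assumes "\<phi> \<in> dual_sp smul E" "x \<in> E"
  shows "norm (\<phi> x) \<le> dual_norm E \<phi> * norm x"
proof (cases "x = 0")
  case True
  then show ?thesis using dual_sp_zero[OF assms(1)] by simp
next
  case False
  define y where "y = (1 / norm x) *\<^sub>R x"
  have "y \<in> E" using assms(2) subspace_E subspace_scale y_def by blast
  moreover have "norm y \<le> 1" using False by (simp add: y_def)
  ultimately have "norm (\<phi> y) \<le> dual_norm E \<phi>"
    unfolding dual_norm_def by (intro cSUP_upper bdd_above_dual_norm assms) auto
  moreover have "norm (\<phi> y) = norm (\<phi> x) / norm x"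
    using dual_sp_scaleR[OF assms] by (simp add: y_def norm_mult norm_divide)
  ultimately show ?thesis using False by (simp add: divide_le_eq mult.commute)
qed

lemma dual_norm_nonneg:
  assumes "\<phi> \<in> dual_sp smul E"
  shows "0 \<le> dual_norm E \<phi>"
proof -
  have "norm (\<phi> 0) \<le> dual_norm E \<phi>"
    unfolding dual_norm_def
    by (intro cSUP_upper bdd_above_dual_norm assms) (use subspace_0[OF subspace_E] in auto)
  then show ?thesis using norm_ge_zero order_trans by blast
qed

lemma dual_norm_le_unit_ball:
  assumes "\<And>x. x \<in> E \<Longrightarrow> norm x \<le> 1 \<Longrightarrow> norm (\<phi> x) \<le> B"
  shows "dual_norm E \<phi> \<le> B"
  unfolding dual_norm_def using assms subspace_0[OF subspace_E] by (intro cSUP_least) auto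

lemma dual_norm_le:
  assumes "0 \<le> B" "\<And>x. x \<in> E \<Longrightarrow> norm (\<phi> x) \<le> B * norm x"
  shows "dual_norm E \<phi> \<le> B"
  using assms by (intro dual_norm_le_unit_ball) (meson mult_left_le order_trans)

lemma dual_norm_scale:
  assumes "\<phi> \<in> dual_sp smul E"
  shows "dual_norm E (\<lambda>x. c * \<phi> x) = norm c * dual_norm E \<phi>"
proof (rule antisym)
  show "dual_norm E (\<lambda>x. c * \<phi> x) \<le> norm c * dual_norm E \<phi>"
    using dual_norm_bound[OF assms] dual_norm_nonneg[OF assms]
    by (intro dual_norm_le) (auto simp: norm_mult mult.assoc mult_left_mono)
  show "norm c * dual_norm E \<phi> \<le> dual_norm E (\<lambda>x. c * \<phi> x)"
  proof (cases "c = 0")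
    case True
    then show ?thesis using dual_norm_nonneg[OF dual_sp_scale[OF assms, of 0]] by simp
  next
    case False
    have "dual_norm E \<phi> = dual_norm E (\<lambda>x. inverse c * (c * \<phi> x))"
      using False by (simp add: field_simps)
    also have "\<dots> \<le> norm (inverse c) * dual_norm E (\<lambda>x. c * \<phi> x)"
      using dual_norm_bound[OF dual_sp_scale[OF assms]] dual_norm_nonneg[OF dual_sp_scale[OF assms]]
      by (intro dual_norm_le) (auto simp: norm_mult mult.assoc mult_left_mono)
    finally have "norm c * dual_norm E \<phi> \<le> norm c * norm (inverse c) * dual_norm E (\<lambda>x. c * \<phi> x)"
      by (simp add: mult_left_mono mult.assoc)
    then show ?thesis using False by (simp add: norm_inverse)
  qed
qed

lemma dual_norm_midpoint:
  assumes "\<phi> \<in> dual_sp smul E" "u \<in> dual_sp smul E"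
  shows "2 * dual_norm E \<phi> \<le> dual_norm E (\<lambda>x. \<phi> x + u x) + dual_norm E (\<lambda>x. \<phi> x - u x)"
proof -
  let ?p = "\<lambda>x. \<phi> x + u x" and ?m = "\<lambda>x. \<phi> x - u x"
  have p: "?p \<in> dual_sp smul E" and m: "?m \<in> dual_sp smul E"
    using assms by (auto intro: dual_sp_add dual_sp_diff)
  have "dual_norm E \<phi> \<le> (dual_norm E ?p + dual_norm E ?m) / 2"
  proof (rule dual_norm_le)
    show "0 \<le> (dual_norm E ?p + dual_norm E ?m) / 2"
      using dual_norm_nonneg[OF p] dual_norm_nonneg[OF m] by simp
    fix x assume "x \<in> E"
    have "2 * norm (\<phi> x) = norm (?p x + ?m x)" by (simp add: norm_mult)
    also have "\<dots> \<le> norm (?p x) + norm (?m x)" by (rule norm_triangle_ineq)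
    also have "\<dots> \<le> dual_norm E ?p * norm x + dual_norm E ?m * norm x"
      using dual_norm_bound[OF p \<open>x \<in> E\<close>] dual_norm_bound[OF m \<open>x \<in> E\<close>] by (rule add_mono)
    finally show "norm (\<phi> x) \<le> (dual_norm E ?p + dual_norm E ?m) / 2 * norm x"
      by (simp add: field_simps)
  qed
  then show ?thesis by simp
qed

lemma dual_norm_nonpos_imp_zero:
  assumes "\<phi> \<in> dual_sp smul E" "dual_norm E \<phi> \<le> 0"
  shows "\<phi> x = 0"
proof (cases "x \<in> E")
  case True
  have "dual_norm E \<phi> * norm x \<le> 0" using assms(2) by (simp add: mult_nonpos_nonneg)
  then have "norm (\<phi> x) \<le> 0" using dual_norm_bound[OF assms(1) True] by linarith
  then show ?thesis by simp
next
  case False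
  then show ?thesis using assms(1) unfolding dual_sp_def by blast
qed

lemma dual_sp_compose:
  assumes "\<phi> \<in> dual_sp smul E" and D: "\<And>x. x \<in> E \<Longrightarrow> D x \<in> E"
    "\<And>x y. x \<in> E \<Longrightarrow> y \<in> E \<Longrightarrow> D (x + y) = D x + D y"
    "\<And>c x. x \<in> E \<Longrightarrow> D (smul c x) = smul c (D x)"
    "\<And>x. x \<in> E \<Longrightarrow> norm (D x) \<le> KD * norm x"
  shows "(\<lambda>x. if x \<in> E then \<phi> (D x) else 0) \<in> dual_sp smul E"
proof -
  have "norm (\<phi> (D x)) \<le> (dual_norm E \<phi> * KD) * norm x" if "x \<in> E" for x
  proof -
    have "norm (\<phi> (D x)) \<le> dual_norm E \<phi> * norm (D x)"
      using dual_norm_bound[OF assms(1) D(1)[OF that]] .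
    also have "\<dots> \<le> dual_norm E \<phi> * (KD * norm x)"
      using D(4)[OF that] dual_norm_nonneg[OF assms(1)] by (rule mult_left_mono)
    finally show ?thesis by (simp add: ac_simps)
  qed
  then have bound: "\<exists>K. \<forall>x\<in>E. norm (if x \<in> E then \<phi> (D x) else 0) \<le> K * norm x"
    by auto
  have \<phi>: "\<And>x y. x \<in> E \<Longrightarrow> y \<in> E \<Longrightarrow> \<phi> (x + y) = \<phi> x + \<phi> y"
    "\<And>c x. x \<in> E \<Longrightarrow> \<phi> (smul c x) = c * \<phi> x"
    using assms(1) unfolding dual_sp_def by blast+
  show ?thesis
    unfolding dual_sp_def mem_Collect_eq
  proof (intro conjI ballI allI impI bound)
    fix x y assume "x \<in> E" "y \<in> E"
    then show "(if x + y \<in> E then \<phi> (D (x + y)) else 0) =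
      (if x \<in> E then \<phi> (D x) else 0) + (if y \<in> E then \<phi> (D y) else 0)"
      using \<phi>(1) D(1,2) subspace_add[OF subspace_E] by simp
  next
    fix c x assume "x \<in> E"
    then show "(if smul c x \<in> E then \<phi> (D (smul c x)) else 0) = c * (if x \<in> E then \<phi> (D x) else 0)"
      using \<phi>(2) D(1,3) smul_closed by simp
  qed simp
qed

lemma L_projection_norm_split:
  assumes Q: "L_projection smul E Q" and \<phi>: "\<phi> \<in> dual_sp smul E" "Q \<phi> = \<phi>"
    and \<theta>: "\<theta> \<in> dual_sp smul E"
  shows "dual_norm E (\<lambda>x. \<phi> x + s * \<theta> x)
    = dual_norm E (\<lambda>x. \<phi> x + s * Q \<theta> x) + norm s * dual_norm E (\<lambda>x. \<theta> x - Q \<theta> x)"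
proof -
  let ?\<psi> = "\<lambda>x. \<phi> x + s * \<theta> x"
  have \<psi>: "?\<psi> \<in> dual_sp smul E" using \<phi>(1) \<theta> by (intro dual_sp_add dual_sp_scale)
  have Q_\<psi>: "Q ?\<psi> = (\<lambda>x. \<phi> x + s * Q \<theta> x)"
    using Q \<phi> \<theta> dual_sp_scale[OF \<theta>] unfolding L_projection_def by simp
  have "dual_norm E ?\<psi> = dual_norm E (Q ?\<psi>) + dual_norm E (\<lambda>x. ?\<psi> x - Q ?\<psi> x)"
    using Q \<psi> unfolding L_projection_def by blast
  also have "(\<lambda>x. ?\<psi> x - Q ?\<psi> x) = (\<lambda>x. s * (\<theta> x - Q \<theta> x))"
    unfolding Q_\<psi> by (simp add: algebra_simps)
  also have "dual_norm E \<dots> = norm s * dual_norm E (\<lambda>x. \<theta> x - Q \<theta> x)"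
    using Q \<theta> unfolding L_projection_def by (intro dual_norm_scale dual_sp_diff) auto
  finally show ?thesis unfolding Q_\<psi> .
qed

lemma L_projection_perturbation:
  assumes Q: "L_projection smul E Q" and \<phi>: "\<phi> \<in> dual_sp smul E" "Q \<phi> = \<phi>"
    and \<theta>: "\<theta> \<in> dual_sp smul E" and "0 \<le> t"
  shows "2 * dual_norm E \<phi> + 2 * t * dual_norm E (\<lambda>x. \<theta> x - Q \<theta> x)
    \<le> dual_norm E (\<lambda>x. \<phi> x + of_real t * \<theta> x) + dual_norm E (\<lambda>x. \<phi> x - of_real t * \<theta> x)"
proof -
  have Q\<theta>: "Q \<theta> \<in> dual_sp smul E" using Q \<theta> unfolding L_projection_def by blast
  have "2 * dual_norm E \<phi>
      \<le> dual_norm E (\<lambda>x. \<phi> x + of_real t * Q \<theta> x) + dual_norm E (\<lambda>x. \<phi> x - of_real t * Q \<theta> x)"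
    using \<phi>(1) dual_sp_scale[OF Q\<theta>] by (rule dual_norm_midpoint)
  moreover have "dual_norm E (\<lambda>x. \<phi> x + of_real t * \<theta> x)
      = dual_norm E (\<lambda>x. \<phi> x + of_real t * Q \<theta> x) + t * dual_norm E (\<lambda>x. \<theta> x - Q \<theta> x)"
    using L_projection_norm_split[OF assms(1-4), of "of_real t"] \<open>0 \<le> t\<close> by simp
  moreover have "dual_norm E (\<lambda>x. \<phi> x - of_real t * \<theta> x)
      = dual_norm E (\<lambda>x. \<phi> x - of_real t * Q \<theta> x) + t * dual_norm E (\<lambda>x. \<theta> x - Q \<theta> x)"
    using L_projection_norm_split[OF assms(1-4), of "- of_real t"] \<open>0 \<le> t\<close> by simp
  ultimately show ?thesis by linarith
qed

text \<open>Averaging the L-decompositions of \<open>\<phi> \<pm> t\<theta>\<close> gives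
  \<open>\<parallel>\<phi>\<parallel> + t\<parallel>\<theta> - Q \<theta>\<parallel> \<le> (1 + C t\<^sup>2)\<parallel>\<phi>\<parallel>\<close>, so \<open>\<parallel>\<theta> - Q \<theta>\<parallel> = O(t)\<close>.\<close>
lemma L_projection_fixes_flat_direction:
  assumes Q: "L_projection smul E Q" and \<phi>: "\<phi> \<in> dual_sp smul E" "Q \<phi> = \<phi>"
    and \<theta>: "\<theta> \<in> dual_sp smul E" and "0 < t0"
    and flat: "\<And>t. 0 < t \<Longrightarrow> t \<le> t0 \<Longrightarrow>
      dual_norm E (\<lambda>x. \<phi> x + of_real t * \<theta> x) \<le> (1 + C * t\<^sup>2) * dual_norm E \<phi> \<and>
      dual_norm E (\<lambda>x. \<phi> x - of_real t * \<theta> x) \<le> (1 + C * t\<^sup>2) * dual_norm E \<phi>"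
  shows "Q \<theta> = \<theta>"
proof -
  define \<theta>' where "\<theta>' = (\<lambda>x. \<theta> x - Q \<theta> x)"
  have "dual_norm E \<theta>' \<le> (C * dual_norm E \<phi>) * t" if "0 < t" "t \<le> t0" for t
  proof -
    have "2 * dual_norm E \<phi> + 2 * t * dual_norm E \<theta>' \<le> 2 * ((1 + C * t\<^sup>2) * dual_norm E \<phi>)"
      using L_projection_perturbation[OF Q \<phi> \<theta>, of t] flat[OF that] that
      unfolding \<theta>'_def by simp
    then have "t * dual_norm E \<theta>' \<le> t * ((C * dual_norm E \<phi>) * t)"
      by (simp add: algebra_simps power2_eq_square)
    then show ?thesis using that by simp
  qed
  then have "dual_norm E \<theta>' \<le> 0" by (rule nonpos_if_le_mult_near_0[OF \<open>0 < t0\<close>])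
  moreover have "\<theta>' \<in> dual_sp smul E"
    using Q \<theta> unfolding \<theta>'_def L_projection_def by (intro dual_sp_diff) auto
  ultimately have "\<theta>' x = 0" for x by (intro dual_norm_nonpos_imp_zero)
  then show ?thesis unfolding \<theta>'_def by (simp add: fun_eq_iff)
qed

lemma dual_norm_compose_perturbation:
  assumes \<phi>: "\<phi> \<in> dual_sp smul E" and D: "\<And>x. x \<in> E \<Longrightarrow> D x \<in> E" and "0 \<le> B"
    and bound: "\<And>x. x \<in> E \<Longrightarrow> norm (x + s *\<^sub>R D x) \<le> B * norm x"
  shows "dual_norm E (\<lambda>x. \<phi> x + of_real s * (if x \<in> E then \<phi> (D x) else 0)) \<le> B * dual_norm E \<phi>"
proof (rule dual_norm_le)
  show "0 \<le> B * dual_norm E \<phi>" using \<open>0 \<le> B\<close> dual_norm_nonneg[OF \<phi>] by simp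
  fix x assume x: "x \<in> E"
  have "\<phi> x + of_real s * (if x \<in> E then \<phi> (D x) else 0) = \<phi> (x + s *\<^sub>R D x)"
    using \<phi> x D[OF x] subspace_scale[OF subspace_E] dual_sp_scaleR[OF \<phi> D[OF x]]
    unfolding dual_sp_def by simp
  also have "norm \<dots> \<le> dual_norm E \<phi> * norm (x + s *\<^sub>R D x)"
    using x D[OF x] subspace_add[OF subspace_E] subspace_scale[OF subspace_E]
    by (intro dual_norm_bound[OF \<phi>]) auto
  also have "\<dots> \<le> dual_norm E \<phi> * (B * norm x)"
    using bound[OF x] dual_norm_nonneg[OF \<phi>] by (rule mult_left_mono)
  finally show "norm (\<phi> x + of_real s * (if x \<in> E then \<phi> (D x) else 0))
      \<le> B * dual_norm E \<phi> * norm x"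
    by (simp add: ac_simps)
qed

lemma M_ideal_annihilator_invariant:
  assumes M: "M_ideal smul E M" and D: "bounded_linear D" "\<And>x. x \<in> E \<Longrightarrow> D x \<in> E"
    "\<And>c x. x \<in> E \<Longrightarrow> D (smul c x) = smul c (D x)"
    and contr: "second_order_contractive_on E D"
    and \<phi>: "\<phi> \<in> annihilator smul E M" and x: "x \<in> M"
  shows "\<phi> (D x) = 0"
proof -
  obtain Q where Q: "L_projection smul E Q" and range: "Q ` dual_sp smul E = annihilator smul E M"
    using M unfolding M_ideal_def by blast
  obtain C t0 where C: "0 \<le> C" "0 < t0"
    and t0: "\<And>t x. \<bar>t\<bar> \<le> t0 \<Longrightarrow> x \<in> E \<Longrightarrow> norm (x + t *\<^sub>R D x) \<le> (1 + C * t\<^sup>2) * norm x"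
    using contr unfolding second_order_contractive_on_def by blast
  have \<phi>_dual: "\<phi> \<in> dual_sp smul E" using \<phi> unfolding annihilator_def by blast
  have Q\<phi>: "Q \<phi> = \<phi>"
  proof -
    obtain \<rho> where "\<rho> \<in> dual_sp smul E" "\<phi> = Q \<rho>" using \<phi> range by blast
    then show ?thesis using Q unfolding L_projection_def by simp
  qed
  define \<theta> where "\<theta> = (\<lambda>x. if x \<in> E then \<phi> (D x) else 0)"
  obtain KD where KD: "\<And>x. norm (D x) \<le> KD * norm x"
    using bounded_linear.pos_bounded[OF D(1)] by (auto simp: mult.commute)
  have \<theta>_dual: "\<theta> \<in> dual_sp smul E"
    unfolding \<theta>_def
    by (rule dual_sp_compose[OF \<phi>_dual D(2) _ D(3), where KD=KD])
      (simp_all add: KD linear_add[OF bounded_linear.linear[OF D(1)]])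
  have perturbed: "dual_norm E (\<lambda>x. \<phi> x + of_real s * \<theta> x) \<le> (1 + C * s\<^sup>2) * dual_norm E \<phi>"
    if "\<bar>s\<bar> \<le> t0" for s
    unfolding \<theta>_def using C(1) t0[OF that]
    by (intro dual_norm_compose_perturbation[OF \<phi>_dual D(2)]) auto
  have "Q \<theta> = \<theta>"
  proof (rule L_projection_fixes_flat_direction[OF Q \<phi>_dual Q\<phi> \<theta>_dual C(2)])
    fix t :: real assume "0 < t" "t \<le> t0"
    then show "dual_norm E (\<lambda>x. \<phi> x + of_real t * \<theta> x) \<le> (1 + C * t\<^sup>2) * dual_norm E \<phi> \<and>
      dual_norm E (\<lambda>x. \<phi> x - of_real t * \<theta> x) \<le> (1 + C * t\<^sup>2) * dual_norm E \<phi>"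
      using perturbed[of t] perturbed[of "- t"] by simp
  qed
  then have "\<theta> \<in> Q ` dual_sp smul E" using \<theta>_dual by (intro image_eqI[of \<theta>]) simp_all
  then have "\<theta> \<in> annihilator smul E M" using range by simp
  moreover have "x \<in> E" using x M unfolding M_ideal_def by blast
  ultimately show ?thesis using x unfolding annihilator_def \<theta>_def by force
qed

lemma M_ideal_invariant:
  assumes M: "M_ideal smul E M" and D: "bounded_linear D" "\<And>x. x \<in> E \<Longrightarrow> D x \<in> E"
    "\<And>c x. x \<in> E \<Longrightarrow> D (smul c x) = smul c (D x)"
    and contr: "second_order_contractive_on E D"
    and separating: "\<And>y. y \<in> E \<Longrightarrow> y \<notin> M \<Longrightarrow> \<exists>\<phi>\<in>annihilator smul E M. \<phi> y \<noteq> 0"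
  shows "D ` M \<subseteq> M"
proof (rule image_subsetI, rule ccontr)
  fix x assume x: "x \<in> M" and "D x \<notin> M"
  moreover have "D x \<in> E" using x M D(2) unfolding M_ideal_def by blast
  ultimately obtain \<phi> where "\<phi> \<in> annihilator smul E M" "\<phi> (D x) \<noteq> 0" using separating by blast
  then show False using M_ideal_annihilator_invariant[OF M D contr _ x] by blast
qed

end

section \<open>M-summands are M-ideals\<close>

locale M_projection_subspace =
  fixes W :: "'a::real_normed_vector set" and P :: "'a \<Rightarrow> 'a"
  assumes subspace_W: "subspace W" and M_projection: "M_projection W P"
begin

sublocale scalar_subspace scaleR W
  by unfold_locales (simp_all add: subspace_W subspace_scale)

lemma P_in: "x \<in> W \<Longrightarrow> P x \<in> W"
  and P_idem: "x \<in> W \<Longrightarrow> P (P x) = P x"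
  and norm_eq_max: "x \<in> W \<Longrightarrow> norm x = max (norm (P x)) (norm (x - P x))"
  and P_add: "x \<in> W \<Longrightarrow> y \<in> W \<Longrightarrow> P (x + y) = P x + P y"
  and P_scaleR: "x \<in> W \<Longrightarrow> P (c *\<^sub>R x) = c *\<^sub>R P x"
  using M_projection unfolding M_projection_def by blast+

lemma P_diff: "x \<in> W \<Longrightarrow> y \<in> W \<Longrightarrow> P (x - y) = P x - P y"
  using P_add[of x "- y"] P_scaleR[of y "- 1"] subspace_neg[OF subspace_W] by simp

lemma P_complement: "x \<in> W \<Longrightarrow> P (x - P x) = 0"
  by (simp add: P_diff P_in P_idem)

lemma norm_P_le: "x \<in> W \<Longrightarrow> norm (P x) \<le> norm x"
  and norm_complement_le: "x \<in> W \<Longrightarrow> norm (x - P x) \<le> norm x"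
  using norm_eq_max by fastforce+

lemma range_eq: "P ` W = {x \<in> W. P x = x}"
  using P_in P_idem by (auto intro: image_eqI[OF sym])

lemma closed_range:
  assumes "closed W"
  shows "closed (P ` W)"
proof -
  have "1-lipschitz_on W P"
  proof (rule lipschitz_onI)
    fix x y assume "x \<in> W" "y \<in> W"
    then show "dist (P x) (P y) \<le> 1 * dist x y"
      using norm_P_le[of "x - y"] P_diff subspace_diff[OF subspace_W] by (simp add: dist_norm)
  qed simp
  then have "continuous_on W (\<lambda>x. P x - x)"
    by (intro continuous_intros lipschitz_on_continuous_on)
  then have "closed {x \<in> W. P x - x = 0}"
    using assms by (rule continuous_closed_preimage_constant)
  then show ?thesis unfolding range_eq by simp
qed

definition complement_functional :: "('a \<Rightarrow> real) \<Rightarrow> 'a \<Rightarrow> real" where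
  "complement_functional \<phi> v = (if v \<in> W then \<phi> (v - P v) else 0)"

definition range_functional :: "('a \<Rightarrow> real) \<Rightarrow> 'a \<Rightarrow> real" where
  "range_functional \<phi> v = (if v \<in> W then \<phi> (P v) else 0)"

lemma complement_functional_dual:
  "\<phi> \<in> dual_sp scaleR W \<Longrightarrow> complement_functional \<phi> \<in> dual_sp scaleR W"
  unfolding complement_functional_def
  by (rule dual_sp_compose[where KD=1])
    (auto simp: P_in P_add P_scaleR subspace_diff[OF subspace_W] norm_complement_le algebra_simps)

lemma range_functional_dual:
  "\<phi> \<in> dual_sp scaleR W \<Longrightarrow> range_functional \<phi> \<in> dual_sp scaleR W"
  unfolding range_functional_def
  by (rule dual_sp_compose[where KD=1]) (auto simp: P_in P_add P_scaleR norm_P_le)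

lemma functional_decompose:
  assumes "\<phi> \<in> dual_sp scaleR W"
  shows "\<phi> v = complement_functional \<phi> v + range_functional \<phi> v"
proof (cases "v \<in> W")
  case True
  then have "\<phi> v = \<phi> ((v - P v) + P v)" by simp
  also have "\<dots> = \<phi> (v - P v) + \<phi> (P v)"
    using assms True P_in subspace_diff[OF subspace_W] unfolding dual_sp_def by blast
  finally show ?thesis using True by (simp add: complement_functional_def range_functional_def)
next
  case False
  then show ?thesis
    using assms by (simp add: complement_functional_def range_functional_def dual_sp_def)
qed

text \<open>Here \<open>\<phi>\<close> is tested on \<open>\<pm>(v - P v) \<pm> P w\<close>, whose norm is at most 1 by the M-property.\<close>
lemma complement_range_functional_le:
  assumes \<phi>: "\<phi> \<in> dual_sp scaleR W"
    and v: "v \<in> W" "norm v \<le> 1" and w: "w \<in> W" "norm w \<le> 1"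
  shows "norm (complement_functional \<phi> v) + norm (range_functional \<phi> w) \<le> dual_norm W \<phi>"
proof -
  define s1 where "s1 = sgn (\<phi> (v - P v))"
  define s2 where "s2 = sgn (\<phi> (P w))"
  define z where "z = s1 *\<^sub>R (v - P v) + s2 *\<^sub>R P w"
  have in_W: "s1 *\<^sub>R (v - P v) \<in> W" "s2 *\<^sub>R P w \<in> W"
    using v w P_in subspace_diff[OF subspace_W] subspace_scale[OF subspace_W] by blast+
  then have z: "z \<in> W" unfolding z_def using subspace_add[OF subspace_W] by blast
  have "P z = s2 *\<^sub>R P w"
    using P_add[OF in_W] P_scaleR P_complement[OF v(1)] P_idem[OF w(1)] P_in w(1)
      subspace_diff[OF subspace_W] v(1) by (simp add: z_def)
  then have "norm (P z) \<le> 1" "norm (z - P z) \<le> 1"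
    using norm_P_le[OF w(1)] norm_complement_le[OF v(1)] v(2) w(2)
    by (auto simp: z_def s1_def s2_def sgn_if)
  then have "norm z \<le> 1" using norm_eq_max[OF z] by simp
  have "norm (complement_functional \<phi> v) + norm (range_functional \<phi> w) = \<phi> z"
    using \<phi> in_W v w P_in subspace_diff[OF subspace_W]
    unfolding dual_sp_def complement_functional_def range_functional_def z_def s1_def s2_def
    by (auto simp: sgn_if)
  also have "\<dots> \<le> dual_norm W \<phi> * norm z" using dual_norm_bound[OF \<phi> z] by simp
  also have "\<dots> \<le> dual_norm W \<phi>"
    using \<open>norm z \<le> 1\<close> dual_norm_nonneg[OF \<phi>] by (simp add: mult_left_le)
  finally show ?thesis .
qed

lemma dual_norm_split:
  assumes \<phi>: "\<phi> \<in> dual_sp scaleR W"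
  shows "dual_norm W \<phi> = dual_norm W (complement_functional \<phi>) + dual_norm W (range_functional \<phi>)"
proof (rule antisym)
  let ?Q = "complement_functional \<phi>" and ?R = "range_functional \<phi>"
  have Q: "?Q \<in> dual_sp scaleR W" and R: "?R \<in> dual_sp scaleR W"
    using \<phi> by (rule complement_functional_dual, rule range_functional_dual)
  show "dual_norm W \<phi> \<le> dual_norm W ?Q + dual_norm W ?R"
  proof (rule dual_norm_le)
    show "0 \<le> dual_norm W ?Q + dual_norm W ?R"
      using dual_norm_nonneg[OF Q] dual_norm_nonneg[OF R] by simp
    fix x assume x: "x \<in> W"
    have "norm (\<phi> x) \<le> norm (?Q x) + norm (?R x)"
      using functional_decompose[OF \<phi>, of x] norm_triangle_ineq by metis
    also have "\<dots> \<le> dual_norm W ?Q * norm x + dual_norm W ?R * norm x"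
      using dual_norm_bound[OF Q x] dual_norm_bound[OF R x] by (rule add_mono)
    finally show "norm (\<phi> x) \<le> (dual_norm W ?Q + dual_norm W ?R) * norm x"
      by (simp add: distrib_right)
  qed
  have "norm (?R w) \<le> dual_norm W \<phi> - dual_norm W ?Q" if "w \<in> W" "norm w \<le> 1" for w
  proof -
    have "dual_norm W ?Q \<le> dual_norm W \<phi> - norm (?R w)"
      using complement_range_functional_le[OF \<phi> _ _ that]
      by (intro dual_norm_le_unit_ball) (simp add: algebra_simps)
    then show ?thesis by simp
  qed
  then have "dual_norm W ?R \<le> dual_norm W \<phi> - dual_norm W ?Q" by (rule dual_norm_le_unit_ball)
  then show "dual_norm W ?Q + dual_norm W ?R \<le> dual_norm W \<phi>" by simp
qed

lemma L_projection_complement_functional: "L_projection scaleR W complement_functional"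
  unfolding L_projection_def
proof (intro conjI ballI allI)
  fix \<phi> assume \<phi>: "\<phi> \<in> dual_sp scaleR W"
  show "complement_functional \<phi> \<in> dual_sp scaleR W" using \<phi> by (rule complement_functional_dual)
  show "complement_functional (complement_functional \<phi>) = complement_functional \<phi>"
    by (auto simp: complement_functional_def fun_eq_iff P_complement P_in
        subspace_diff[OF subspace_W])
  have "(\<lambda>x. \<phi> x - complement_functional \<phi> x) = range_functional \<phi>"
    using functional_decompose[OF \<phi>] by (simp add: fun_eq_iff)
  then show "dual_norm W \<phi> = dual_norm W (complement_functional \<phi>)
      + dual_norm W (\<lambda>x. \<phi> x - complement_functional \<phi> x)"
    using dual_norm_split[OF \<phi>] by simp
qed (auto simp: complement_functional_def fun_eq_iff)

lemma complement_functional_image: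
  "complement_functional ` dual_sp scaleR W = annihilator scaleR W (P ` W)"
proof (intro equalityI subsetI)
  fix \<psi> assume "\<psi> \<in> complement_functional ` dual_sp scaleR W"
  then obtain \<phi> where \<phi>: "\<phi> \<in> dual_sp scaleR W" "\<psi> = complement_functional \<phi>" by blast
  then show "\<psi> \<in> annihilator scaleR W (P ` W)"
    using complement_functional_dual[OF \<phi>(1)] dual_sp_zero[OF \<phi>(1)]
    by (auto simp: annihilator_def complement_functional_def P_in P_idem)
next
  fix \<phi> assume "\<phi> \<in> annihilator scaleR W (P ` W)"
  then have \<phi>: "\<phi> \<in> dual_sp scaleR W" and "range_functional \<phi> = (\<lambda>_. 0)"
    by (auto simp: annihilator_def range_functional_def fun_eq_iff)
  then have "complement_functional \<phi> = \<phi>"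
    using functional_decompose[OF \<phi>] by (simp add: fun_eq_iff)
  then show "\<phi> \<in> complement_functional ` dual_sp scaleR W" using \<phi> by (metis image_eqI)
qed

lemma M_ideal_range:
  assumes "closed W"
  shows "M_ideal scaleR W (P ` W)"
proof -
  have "0 \<in> P ` W" "\<forall>x\<in>P ` W. \<forall>y\<in>P ` W. x + y \<in> P ` W" "\<forall>c. \<forall>x\<in>P ` W. c *\<^sub>R x \<in> P ` W"
    unfolding range_eq
    using subspace_0[OF subspace_W] P_scaleR[of 0 0] P_add subspace_add[OF subspace_W]
      P_scaleR subspace_scale[OF subspace_W] by auto
  then show ?thesis
    unfolding M_ideal_def
    using closed_range[OF assms] P_in L_projection_complement_functional complement_functional_image
    by blast
qed

end

lemma M_summand_imp_M_ideal:
  assumes "closed W" "subspace W" "M_summand W M"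
  shows "M_ideal scaleR W M"
proof -
  obtain P where "M_projection W P" "M = P ` W" using assms(3) unfolding M_summand_def by blast
  then show ?thesis
    using M_projection_subspace.M_ideal_range[OF _ assms(1)] assms(2)
    by (simp add: M_projection_subspace_def)
qed

section \<open>Annihilators of M-ideals separate points\<close>

lemma annihilator_separates_real:
  assumes E: "subspace E" and M: "M_ideal scaleR E M" and y: "y \<in> E" "y \<notin> M"
  shows "\<exists>\<phi>\<in>annihilator scaleR E M. \<phi> y \<noteq> 0"
proof -
  have "closed M" "subspace M" "M \<subseteq> E"
    using M unfolding M_ideal_def subspace_def by blast+
  then obtain f where f: "linear f" "\<And>x. \<bar>f x\<bar> \<le> norm x" "\<And>x. x \<in> M \<Longrightarrow> f x = 0" "f y \<noteq> 0"
    using closed_subspace_separation y(2) by metis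
  define \<phi> where "\<phi> v = (if v \<in> E then f v else 0)" for v
  have "\<phi> \<in> dual_sp scaleR E"
    unfolding dual_sp_def mem_Collect_eq
  proof (intro conjI ballI allI impI)
    show "\<phi> (u + v) = \<phi> u + \<phi> v" if "u \<in> E" "v \<in> E" for u v
      using that subspace_add[OF E] by (simp add: \<phi>_def linear_add[OF f(1)])
    show "\<phi> (c *\<^sub>R v) = c * \<phi> v" if "v \<in> E" for c v
      using that subspace_scale[OF E] by (simp add: \<phi>_def linear_scale[OF f(1)])
    show "\<exists>K. \<forall>v\<in>E. norm (\<phi> v) \<le> K * norm v"
      using f(2) by (intro exI[of _ 1]) (simp add: \<phi>_def)
  qed (simp add: \<phi>_def)
  moreover have "\<forall>x\<in>M. \<phi> x = 0" using f(3) by (simp add: \<phi>_def)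
  ultimately show ?thesis
    using f(4) y(1) by (intro bexI[of _ \<phi>]) (simp_all add: annihilator_def \<phi>_def)
qed

lemma complex_structureD:
  assumes "complex_structure J"
  shows "linear J" "J (J x) = - x" "norm (J x) = norm x"
proof -
  show "linear J" "J (J x) = - x" using assms unfolding complex_structure_def by blast+
  have "norm (cscale J \<i> x) = cmod \<i> * norm x" using assms unfolding complex_structure_def by blast
  then show "norm (J x) = norm x" by (simp add: cscale_def)
qed

lemma complexification_in_dual:
  assumes J: "complex_structure J" and f: "linear f" "\<And>x. \<bar>f x\<bar> \<le> norm x"
  shows "(\<lambda>v. Complex (f v) (- f (J v))) \<in> dual_sp (cscale J) UNIV"
  unfolding dual_sp_def mem_Collect_eq
proof (intro conjI ballI allI impI)
  note J = complex_structureD[OF J]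
  show "Complex (f (u + v)) (- f (J (u + v)))
      = Complex (f u) (- f (J u)) + Complex (f v) (- f (J v))" for u v
    using linear_add[OF J(1)] linear_add[OF f(1)] by (simp add: complex_eq_iff)
  show "Complex (f (cscale J c v)) (- f (J (cscale J c v))) = c * Complex (f v) (- f (J v))" for c v
  proof -
    have "J (cscale J c v) = Re c *\<^sub>R J v - Im c *\<^sub>R v"
      using linear_add[OF J(1)] linear_scale[OF J(1)] J(2) by (simp add: cscale_def)
    then have "f (J (cscale J c v)) = Re c * f (J v) - Im c * f v"
      using linear_diff[OF f(1)] linear_scale[OF f(1)] by simp
    moreover have "f (cscale J c v) = Re c * f v + Im c * f (J v)"
      using linear_add[OF f(1)] linear_scale[OF f(1)] by (simp add: cscale_def)
    ultimately show ?thesis by (simp add: complex_eq_iff algebra_simps)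
  qed
  have "norm (Complex (f v) (- f (J v))) \<le> 2 * norm v" for v
  proof -
    have "norm (Complex (f v) (- f (J v))) \<le> \<bar>f v\<bar> + \<bar>f (J v)\<bar>"
      using cmod_le[of "Complex (f v) (- f (J v))"] by simp
    also have "\<dots> \<le> norm v + norm (J v)" using f(2)[of v] f(2)[of "J v"] by (rule add_mono)
    finally show ?thesis using J(3) by simp
  qed
  then show "\<exists>K. \<forall>v\<in>UNIV. norm (Complex (f v) (- f (J v))) \<le> K * norm v" by blast
qed simp

lemma annihilator_separates_complex:
  assumes J: "complex_structure J" and M: "M_ideal (cscale J) UNIV M" and y: "y \<notin> M"
  shows "\<exists>\<phi>\<in>annihilator (cscale J) UNIV M. \<phi> y \<noteq> 0"
proof -
  have M_closed: "cscale J c x \<in> M" if "x \<in> M" for c x using M that unfolding M_ideal_def by blast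
  have "r *\<^sub>R x = cscale J (of_real r) x" for r x by (simp add: cscale_def)
  then have "closed M" "subspace M"
    using M M_closed unfolding M_ideal_def subspace_def by metis+
  then obtain f where f: "linear f" "\<And>x. \<bar>f x\<bar> \<le> norm x" "\<And>x. x \<in> M \<Longrightarrow> f x = 0" "f y \<noteq> 0"
    using closed_subspace_separation y by metis
  have "J x \<in> M" if "x \<in> M" for x
    using M_closed[OF that, of \<i>] by (simp add: cscale_def)
  then have "\<forall>x\<in>M. Complex (f x) (- f (J x)) = 0" using f(3) by (simp add: complex_eq_iff)
  then show ?thesis
    using complexification_in_dual[OF J f(1,2)] f(4)
    by (intro bexI[of _ "\<lambda>v. Complex (f v) (- f (J v))"])
      (simp_all add: annihilator_def complex_eq_iff)
qed

section \<open>JB*-triples\<close>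

lemma complex_JB_tripleD:
  assumes "complex_JB_triple J T"
  shows "complex_structure J" "linear (\<lambda>x. T x y z)" "linear (\<lambda>y. T x y z)" "linear (T x y)"
    "T (J x) y z = J (T x y z)" "T x (J y) z = - J (T x y z)" "T x y z = T z y x"
    "\<exists>K. \<forall>x y z. norm (T x y z) \<le> K * norm x * norm y * norm z"
    "hermitian J (Blinfun (T a a))"
  by (use assms[unfolded complex_JB_triple_def] in \<open>blast | auto\<close>)+

lemma complex_JB_triple_bounded_linear:
  assumes "complex_JB_triple J T"
  shows "bounded_linear (T a b)"
proof -
  obtain K where K: "\<And>x y z. norm (T x y z) \<le> K * norm x * norm y * norm z"
    using complex_JB_tripleD(8)[OF assms] by blast
  show ?thesis
  proof (rule bounded_linear_intro)
    show "T a b (x + y) = T a b x + T a b y" "T a b (r *\<^sub>R x) = r *\<^sub>R T a b x" for x y r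
      using complex_JB_tripleD(4)[OF assms] by (simp_all add: linear_add linear_scale)
    show "norm (T a b x) \<le> norm x * (K * norm a * norm b)" for x
      using K[of a b x] by (simp add: ac_simps)
  qed
qed

lemma bounded_linear_delta:
  assumes "complex_JB_triple J T"
  shows "bounded_linear (delta T a b)"
  unfolding delta_def[abs_def]
  by (rule bounded_linear_sub[OF complex_JB_triple_bounded_linear[OF assms]
        complex_JB_triple_bounded_linear[OF assms]])

lemma delta_commute_J:
  assumes "complex_JB_triple J T"
  shows "delta T a b (J x) = J (delta T a b x)"
proof -
  have "T u v (J x) = J (T u v x)" for u v
    using complex_JB_tripleD(5,7)[OF assms] by metis
  then show ?thesis
    unfolding delta_def
    by (simp add: linear_diff complex_structureD(1)[OF complex_JB_tripleD(1)[OF assms]])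
qed

lemma delta_eq_J_L:
  assumes "complex_JB_triple J T"
  shows "delta T a b x = J (T (a + J b) (a + J b) x) - J (T a a x) - J (T b b x)"
proof -
  note J = complex_structureD(1,2)[OF complex_JB_tripleD(1)[OF assms]]
  note lin1 = complex_JB_tripleD(2)[OF assms] and lin2 = complex_JB_tripleD(3)[OF assms]
  note J12 = complex_JB_tripleD(5,6)[OF assms]
  have "T (a + J b) (a + J b) x = T a a x + T a (J b) x + T (J b) a x + T (J b) (J b) x"
    using linear_add[OF lin1] linear_add[OF lin2] by simp
  also have "\<dots> = T a a x - J (T a b x) + J (T b a x) + T b b x"
    using J12 J(2) linear_neg[OF J(1)] by simp
  finally have "J (T (a + J b) (a + J b) x) = J (T a a x) + T a b x - T b a x + J (T b b x)"
    using J linear_add[OF J(1)] linear_diff[OF J(1)] by simp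
  then show ?thesis unfolding delta_def by (simp add: algebra_simps)
qed

lemma second_order_contractive_J_L:
  assumes "complex_JB_triple J T"
  shows "second_order_contractive_on S (\<lambda>x. J (T w w x))"
proof -
  note J = complex_structureD[OF complex_JB_tripleD(1)[OF assms]]
  have "bounded_linear J"
    by (rule bounded_linear_intro[where K=1]) (simp_all add: J linear_add linear_scale)
  then have apply_eq: "blinfun_apply (Blinfun J o\<^sub>L Blinfun (T w w)) = (\<lambda>x. J (T w w x))"
    using complex_JB_triple_bounded_linear[OF assms]
    by (simp add: bounded_linear_Blinfun_apply fun_eq_iff)
  have "hermitian J (Blinfun (T w w))" by (rule complex_JB_tripleD(9)[OF assms])
  then have "second_order_contractive_on S (blinfun_apply (Blinfun J o\<^sub>L Blinfun (T w w)))"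
    unfolding hermitian_def by (intro second_order_contractive_if_exp_contractive) simp
  then show ?thesis unfolding apply_eq .
qed

lemma second_order_contractive_delta:
  assumes "complex_JB_triple J T"
  shows "second_order_contractive_on S (delta T a b)"
proof -
  have "second_order_contractive_on S
      (\<lambda>x. (J (T (a + J b) (a + J b) x) + - J (T a a x)) + - J (T b b x))"
    by (intro second_order_contractive_on_add second_order_contractive_on_uminus
        second_order_contractive_J_L[OF assms])
  then show ?thesis by (simp add: delta_eq_J_L[OF assms, abs_def])
qed

lemma M_ideal_delta_invariant_complex:
  assumes T: "complex_JB_triple J T" and M: "M_ideal (cscale J) UNIV M"
  shows "delta T a b ` M \<subseteq> M"
proof -
  interpret scalar_subspace "cscale J" UNIV
    by unfold_locales (simp_all add: cscale_def)
  have "delta T a b (cscale J c x) = cscale J c (delta T a b x)" for c x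
    using linear_add[OF bounded_linear.linear[OF bounded_linear_delta[OF T]]]
      linear_scale[OF bounded_linear.linear[OF bounded_linear_delta[OF T]]]
    by (simp add: cscale_def delta_commute_J[OF T])
  then show ?thesis
    using annihilator_separates_complex[OF complex_JB_tripleD(1)[OF T] M]
    by (intro M_ideal_invariant[OF M bounded_linear_delta[OF T] _ _
          second_order_contractive_delta[OF T]])
      auto
qed

lemma M_ideal_delta_invariant_real:
  assumes T: "real_JB_triple J T E" and M: "M_ideal scaleR E M" and ab: "a \<in> E" "b \<in> E"
  shows "delta T a b ` M \<subseteq> M"
proof -
  have cT: "complex_JB_triple J T" and E: "subspace E"
    and T_E: "\<And>x y z. x \<in> E \<Longrightarrow> y \<in> E \<Longrightarrow> z \<in> E \<Longrightarrow> T x y z \<in> E"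
    using T unfolding real_JB_triple_def by blast+
  interpret scalar_subspace scaleR E
    by unfold_locales (simp_all add: E subspace_scale)
  have "delta T a b x \<in> E" if "x \<in> E" for x
    unfolding delta_def using T_E ab that subspace_diff[OF E] by blast
  then show ?thesis
    using annihilator_separates_real[OF E M]
      linear_scale[OF bounded_linear.linear[OF bounded_linear_delta[OF cT]]]
    by (intro M_ideal_invariant[OF M bounded_linear_delta[OF cT] _ _
          second_order_contractive_delta[OF cT]])
      auto
qed

theorem corollary3p3:
  fixes J :: "'a::banach \<Rightarrow> 'a" and T :: "'a \<Rightarrow> 'a \<Rightarrow> 'a \<Rightarrow> 'a"
  shows
    "(complex_JB_triple J T \<and> M_ideal (cscale J) (UNIV :: 'a set) M
        \<longrightarrow> (\<forall>a b. delta T a b ` M \<subseteq> M))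
     \<and> (\<forall>E M. real_JB_triple J T E \<and> M_ideal (scaleR :: real \<Rightarrow> 'a \<Rightarrow> 'a) E M
        \<longrightarrow> (\<forall>a\<in>E. \<forall>b\<in>E. delta T a b ` M \<subseteq> M))
     \<and> (\<forall>W M (\<Phi> :: ('p::banach \<Rightarrow>\<^sub>L real) \<Rightarrow> 'a). real_JBW_triple J T W \<Phi> \<and> M_summand W M
        \<longrightarrow> (\<forall>a\<in>W. \<forall>b\<in>W. delta T a b ` M \<subseteq> M))"
proof (intro conjI allI impI ballI)
  show "delta T a b ` M \<subseteq> M" if "complex_JB_triple J T \<and> M_ideal (cscale J) UNIV M" for a b
    using M_ideal_delta_invariant_complex that by blast
next
  fix E M' a b
  assume "real_JB_triple J T E \<and> M_ideal scaleR E M'" "a \<in> E" "b \<in> E"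
  then show "delta T a b ` M' \<subseteq> M'" using M_ideal_delta_invariant_real by blast
next
  fix W M' and \<Phi> :: "('p::banach \<Rightarrow>\<^sub>L real) \<Rightarrow> 'a" and a b
  assume W: "real_JBW_triple J T W \<Phi> \<and> M_summand W M'" and ab: "a \<in> W" "b \<in> W"
  then have T: "real_JB_triple J T W" unfolding real_JBW_triple_def by blast
  then have "M_ideal scaleR W M'"
    using M_summand_imp_M_ideal W unfolding real_JB_triple_def by blast
  then show "delta T a b ` M' \<subseteq> M'" using M_ideal_delta_invariant_real[OF T _ ab] by blast
qed

end
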